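(* Let $\alpha,\beta,\gamma,\lambda,x$ be non-negative integers with $(\alpha,\beta,\gamma,\lambda,x)\neq(0,0,0,0,0)$. Then for every integer $n\ge0$, $$T_{n+1}^{\lambda,x}(\alpha,\beta,\gamma)=\gamma\,T_n^{\lambda,x}(\alpha,\beta,\gamma-\alpha)+x\beta\lambda\sum_{k=0}^{n}\binom{n}{k}T_k^{\lambda,x}(\alpha,\beta,\gamma)\,T_{n-k}^{1,x}(\alpha,\beta,\beta-\alpha).$$
   Context: For complex numbers $c,\alpha$ and an integer $n\ge 0$ let $(c|\alpha)_n=\prod_{i=0}^{n-1}(c-i\alpha)$, with $(c|\alpha)_0=1$. Let $E_{\alpha,c}(t)=\sum_{n\ge 0}(c|\alpha)_n\,t^n/n!$, viewed as a formal power series in $t$. It equals $(1+\alpha t)^{c/\alpha}$ if $\alpha\neq0$ and $e^{ct}$ if $\alpha=0$. For complex $\alpha,\beta,\gamma,x$ and a non-negative integer $\lambda$, the numbers $T_n^{\lambda,x}(\alpha,\beta,\gamma)$, $n\ge0$, are defined by the formal power series identity $$\sum_{n\ge0}T_n^{\lambda,x}(\alpha,\beta,\gamma)\frac{t^n}{n!}=E_{\alpha,\gamma}(t)\,\bigl(1-x(E_{\alpha,\beta}(t)-1)\bigr)^{-\lambda}.$$ The third argument may be any complex number. *)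

theory Defs
  imports "HOL-Computational_Algebra.Formal_Power_Series"
begin

definition gfall :: "complex \<Rightarrow> complex \<Rightarrow> nat \<Rightarrow> complex" where
  "gfall c a n = (\<Prod>i<n. c - of_nat i * a)"

definition E_fps :: "complex \<Rightarrow> complex \<Rightarrow> complex fps" where
  "E_fps a c = Abs_fps (\<lambda>n. gfall c a n / fact n)"

text \<open>Generating function E_{alpha,gamma}(t) (1 - x (E_{alpha,beta}(t) - 1))^(-lambda).
  The series 1 - x(E-1) has constant term 1, so its fps inverse is the genuine inverse.\<close>
definition T_gf :: "nat \<Rightarrow> complex \<Rightarrow> complex \<Rightarrow> complex \<Rightarrow> complex \<Rightarrow> complex fps" where
  "T_gf lam x a b g = E_fps a g * (inverse (1 - fps_const x * (E_fps a b - 1))) ^ lam"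

definition T :: "nat \<Rightarrow> nat \<Rightarrow> complex \<Rightarrow> complex \<Rightarrow> complex \<Rightarrow> complex \<Rightarrow> complex" where
  "T n lam x a b g = fact n * fps_nth (T_gf lam x a b g) n"

end

theory Submission
  imports Defs
begin

text \<open>Differentiating the generating function gives
  \<open>E'_{\<alpha>,\<gamma>} = \<gamma> E_{\<alpha>,\<gamma>-\<alpha>}\<close> and, with \<open>G = 1 - x(E_{\<alpha>,\<beta>} - 1)\<close>,
  \<open>(G\<^sup>-\<^sup>\<lambda>)' = \<lambda> x \<beta> E_{\<alpha>,\<beta>-\<alpha>} G\<^sup>-\<^sup>1 G\<^sup>-\<^sup>\<lambda>\<close>; the factor \<open>E_{\<alpha>,\<beta>-\<alpha>} G\<^sup>-\<^sup>1\<close>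
  is the generating function of \<open>T^{1,x}(\<alpha>,\<beta>,\<beta>-\<alpha>)\<close>.
  Reading off exponential coefficients, where products become binomial convolutions,
  yields the recurrence for all complex parameters.\<close>

lemma fact_fps_nth_Suc:
  fixes F :: "'a::{comm_semiring_1, semiring_char_0} fps"
  shows "fact (Suc n) * fps_nth F (Suc n) = fact n * fps_nth (fps_deriv F) n"
  by (simp only: fact_Suc fps_deriv_nth) (simp only: Suc_eq_plus1 mult_ac)

lemma fact_fps_nth_mult:
  fixes F G :: "'a::{comm_semiring_1, semiring_char_0} fps"
  shows "fact n * fps_nth (F * G) n =
    (\<Sum>k=0..n. of_nat (n choose k) * (fact k * fps_nth F k) * (fact (n - k) * fps_nth G (n - k)))"
  unfolding fps_mult_nth sum_distrib_left
proof (rule sum.cong[OF refl])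
  fix k assume "k \<in> {0..n}"
  then have "fact k * fact (n - k) * (n choose k) = fact n"
    by (simp add: binomial_fact_lemma)
  then have "(fact n :: 'a) = of_nat (fact k * fact (n - k) * (n choose k))"
    by (simp only: of_nat_fact)
  then show "fact n * (fps_nth F k * fps_nth G (n - k)) =
      of_nat (n choose k) * (fact k * fps_nth F k) * (fact (n - k) * fps_nth G (n - k))"
    by (simp only: of_nat_mult of_nat_fact mult_ac)
qed

lemma gfall_Suc: "gfall c a (Suc n) = c * gfall (c - a) a n"
  unfolding gfall_def prod.lessThan_Suc_shift by (simp add: algebra_simps)

lemma fps_nth_E_fps_0 [simp]: "fps_nth (E_fps a c) 0 = 1"
  by (simp add: E_fps_def gfall_def)

lemma fps_deriv_E_fps: "fps_deriv (E_fps a c) = fps_const c * E_fps a (c - a)"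
proof (rule fps_ext)
  fix n
  have "of_nat (Suc n) * (gfall c a (Suc n) / fact (Suc n)) = gfall c a (Suc n) / (fact n :: complex)"
    by (simp add: field_simps del: of_nat_Suc)
  then show "fps_nth (fps_deriv (E_fps a c)) n = fps_nth (fps_const c * E_fps a (c - a)) n"
    unfolding E_fps_def by (simp add: gfall_Suc del: of_nat_Suc)
qed

lemma fps_deriv_inverse_T_denominator:
  "fps_deriv (inverse (1 - fps_const x * (E_fps a b - 1))) =
    fps_const (x * b) * E_fps a (b - a) * (inverse (1 - fps_const x * (E_fps a b - 1)))\<^sup>2"
  (is "fps_deriv (inverse ?G) = _")
proof -
  have dG: "fps_deriv ?G = - fps_const (x * b) * E_fps a (b - a)"
    by (simp add: fps_deriv_E_fps fps_const_mult [symmetric] algebra_simps del: fps_const_mult)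
  have "fps_nth ?G 0 = 1" by simp
  then have "fps_deriv (inverse ?G) = - fps_deriv ?G * (inverse ?G)\<^sup>2"
    by (simp add: fps_inverse_deriv)
  also have "\<dots> = - (- fps_const (x * b) * E_fps a (b - a)) * (inverse ?G)\<^sup>2"
    by (simp only: dG)
  finally show ?thesis by (simp only: minus_mult_left minus_minus)
qed

lemma fps_deriv_T_gf:
  "fps_deriv (T_gf lam x a b g) = fps_const g * T_gf lam x a b (g - a)
     + fps_const (x * b * of_nat lam) * (T_gf lam x a b g * T_gf 1 x a b (b - a))"
proof -
  define I where "I = inverse (1 - fps_const x * (E_fps a b - 1))"
  have pw: "fps_const (of_nat lam) * I ^ (lam - 1) * I\<^sup>2 = fps_const (of_nat lam) * (I ^ lam * I)"
    by (cases lam) (simp_all add: power2_eq_square algebra_simps)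
  have dI: "fps_deriv I = fps_const (x * b) * E_fps a (b - a) * I\<^sup>2"
    unfolding I_def by (rule fps_deriv_inverse_T_denominator)
  have "fps_deriv (E_fps a g * I ^ lam) = fps_const g * E_fps a (g - a) * I ^ lam
       + E_fps a g * (fps_const (of_nat lam) * I ^ (lam - 1) * I\<^sup>2) * fps_const (x * b) * E_fps a (b - a)"
    by (simp add: fps_deriv_power fps_deriv_E_fps dI algebra_simps)
  also have "\<dots> = fps_const g * E_fps a (g - a) * I ^ lam
       + fps_const (x * b * of_nat lam) * ((E_fps a g * I ^ lam) * (E_fps a (b - a) * I))"
    unfolding pw by (simp add: fps_const_mult [symmetric] algebra_simps del: fps_const_mult)
  finally show ?thesis unfolding T_gf_def I_def by simp
qed

lemma T_Suc:
  "T (Suc n) lam x a b g = g * T n lam x a b (g - a)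
     + x * b * of_nat lam * (\<Sum>k=0..n. of_nat (n choose k) * T k lam x a b g * T (n - k) 1 x a b (b - a))"
proof -
  have "T (Suc n) lam x a b g = fact n * fps_nth (fps_deriv (T_gf lam x a b g)) n"
    unfolding T_def by (rule fact_fps_nth_Suc)
  also have "\<dots> = g * (fact n * fps_nth (T_gf lam x a b (g - a)) n)
      + x * b * of_nat lam * (fact n * fps_nth (T_gf lam x a b g * T_gf 1 x a b (b - a)) n)"
    by (simp only: fps_deriv_T_gf fps_add_nth fps_mult_left_const_nth) (simp add: algebra_simps)
  finally show ?thesis
    unfolding fact_fps_nth_mult by (simp add: T_def mult.assoc)
qed

text \<open>The recurrence holds for all complex parameters.\<close>

theorem theorem9:
  fixes al be ga lam x n :: nat
  assumes "(al, be, ga, lam, x) \<noteq> (0, 0, 0, 0, 0)"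
  shows "T (Suc n) lam (of_nat x) (of_nat al) (of_nat be) (of_nat ga) =
    of_nat ga * T n lam (of_nat x) (of_nat al) (of_nat be) (of_nat ga - of_nat al)
    + of_nat x * of_nat be * of_nat lam *
      (\<Sum>k=0..n. of_nat (n choose k) * T k lam (of_nat x) (of_nat al) (of_nat be) (of_nat ga)
                 * T (n - k) 1 (of_nat x) (of_nat al) (of_nat be) (of_nat be - of_nat al))"
  by (rule T_Suc)

end
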